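(* Let $G$ be a finite graph whose edges are totally ordered and labelled $e_1<e_2<\dots<e_m$. Suppose that for some $i$ and some $k>0$ the edges $e_i,e_{i+1},\dots,e_{i+k}$ are all positive and form a path $P_{k+1}$ in $G$, traversed in this order (so consecutive edges $e_{i+r},e_{i+r+1}$ share an interior vertex of the path), and that every interior vertex of this path has degree exactly two in $G$. Let $S$ be any spanning tree of $G$. Then the subword of the activity word $a(S)$ formed by the letters at positions $i,\dots,i+k$ (i.e. $a(e_i,S)a(e_{i+1},S)\cdots a(e_{i+k},S)$) is one of the following: (1) when $S$ contains all edges of $P_{k+1}$: $L L\cdots L$ or $D D\cdots D$ (all $k+1$ letters equal); (2) when $S$ omits exactly the edge $e_{i+j}$ of $P_{k+1}$ for some $0<j\le k$: $L^{j}\,d\,D^{k-j}$, i.e. $e_i,\dots,e_{i+j-1}$ are labelled $L$, $e_{i+j}$ is labelled $d$, and $e_{i+j+1},\dots,e_{i+k}$ are labelled $D$; (3) when $S$ omits exactly the first edge $e_i$: $\ell\, D^{k}$ or $d\,D^{k}$.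
   Context: Tutte's activity: let $G$ be a graph with signed edges (each edge positive or negative) whose $m$ edges are totally ordered. For a spanning tree $S$ of $G$ and an edge $e$: if $e\in S$ and $e$ is positive, $e$ is internally active, letter $L$, if $e$ is the lowest-ordered edge of $G$ that reconnects the two components of $S-\{e\}$, and internally inactive, letter $D$, otherwise. If $e\notin S$ and $e$ is positive, $e$ is externally active, letter $\ell$, if $e$ is the lowest-ordered edge of the unique cycle contained in $S\cup\{e\}$, and externally inactive, letter $d$, otherwise. For negative edges the same rules give the barred letters $\overline{L},\overline{D},\overline{\ell},\overline{d}$. The letter of $e$ is denoted $a(e,S)$, and the activity word $a(S)$ is the word of length $m$ whose $r$-th letter is $a(e_r,S)$. *)

theory Defs
  imports Main
begin

text \<open>A finite (multi)graph with vertex set V and edges labelled 1..m in their total order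
  e_1 < ... < e_m; edge r has endpoints ends r (unordered: the pair order is irrelevant),
  loops allowed. pos r says whether edge r is positive.\<close>

definition graph :: "'v set \<Rightarrow> nat \<Rightarrow> (nat \<Rightarrow> 'v \<times> 'v) \<Rightarrow> bool" where
  "graph V m ends \<longleftrightarrow> finite V \<and> (\<forall>r\<in>{1..m}. fst (ends r) \<in> V \<and> snd (ends r) \<in> V)"

definition incident :: "(nat \<Rightarrow> 'v \<times> 'v) \<Rightarrow> nat \<Rightarrow> 'v \<Rightarrow> bool" where
  "incident ends r v \<longleftrightarrow> v = fst (ends r) \<or> v = snd (ends r)"

text \<open>degree of v in G: number of edge-ends at v (a loop counts twice)\<close>
definition degree :: "nat \<Rightarrow> (nat \<Rightarrow> 'v \<times> 'v) \<Rightarrow> 'v \<Rightarrow> nat" where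
  "degree m ends v = card {r\<in>{1..m}. fst (ends r) = v} + card {r\<in>{1..m}. snd (ends r) = v}"

definition adj :: "(nat \<Rightarrow> 'v \<times> 'v) \<Rightarrow> nat set \<Rightarrow> ('v \<times> 'v) set" where
  "adj ends F = {(x, y). \<exists>r\<in>F. (x, y) = ends r \<or> (y, x) = ends r}"

definition conn :: "(nat \<Rightarrow> 'v \<times> 'v) \<Rightarrow> nat set \<Rightarrow> 'v \<Rightarrow> 'v \<Rightarrow> bool" where
  "conn ends F x y \<longleftrightarrow> (x, y) \<in> (adj ends F)\<^sup>*"

definition spanning_tree :: "'v set \<Rightarrow> nat \<Rightarrow> (nat \<Rightarrow> 'v \<times> 'v) \<Rightarrow> nat set \<Rightarrow> bool" where
  "spanning_tree V m ends S \<longleftrightarrow> S \<subseteq> {1..m}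
     \<and> (\<forall>x\<in>V. \<forall>y\<in>V. conn ends S x y)
     \<and> (\<forall>r\<in>S. \<not> conn ends (S - {r}) (fst (ends r)) (snd (ends r)))"

text \<open>for e in S: f reconnects the two components of S - {e}\<close>
definition reconnects :: "(nat \<Rightarrow> 'v \<times> 'v) \<Rightarrow> nat set \<Rightarrow> nat \<Rightarrow> nat \<Rightarrow> bool" where
  "reconnects ends S e f \<longleftrightarrow> \<not> conn ends (S - {e}) (fst (ends f)) (snd (ends f))"

text \<open>for e not in S: the edges of the unique cycle in S \<union> {e} are e together with the tree
  edges f on the path of S between the endpoints of e, i.e. those f \<in> S whose removal
  disconnects the endpoints of e\<close>
definition on_cycle :: "(nat \<Rightarrow> 'v \<times> 'v) \<Rightarrow> nat set \<Rightarrow> nat \<Rightarrow> nat \<Rightarrow> bool" where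
  "on_cycle ends S e f \<longleftrightarrow> f = e \<or> (f \<in> S \<and> \<not> conn ends (S - {f}) (fst (ends e)) (snd (ends e)))"

datatype letter = L | D | l | d | Lbar | Dbar | lbar | dbar

definition int_active :: "nat \<Rightarrow> (nat \<Rightarrow> 'v \<times> 'v) \<Rightarrow> nat set \<Rightarrow> nat \<Rightarrow> bool" where
  "int_active m ends S e \<longleftrightarrow> (\<forall>f\<in>{1..m}. reconnects ends S e f \<longrightarrow> e \<le> f)"

definition ext_active :: "nat \<Rightarrow> (nat \<Rightarrow> 'v \<times> 'v) \<Rightarrow> nat set \<Rightarrow> nat \<Rightarrow> bool" where
  "ext_active m ends S e \<longleftrightarrow> (\<forall>f\<in>{1..m}. on_cycle ends S e f \<longrightarrow> e \<le> f)"

definition act :: "nat \<Rightarrow> (nat \<Rightarrow> 'v \<times> 'v) \<Rightarrow> (nat \<Rightarrow> bool) \<Rightarrow> nat set \<Rightarrow> nat \<Rightarrow> letter" where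
  "act m ends pos S e =
     (if e \<in> S then
        (if int_active m ends S e then (if pos e then L else Lbar) else (if pos e then D else Dbar))
      else
        (if ext_active m ends S e then (if pos e then l else lbar) else (if pos e then d else dbar)))"

definition activity_word :: "nat \<Rightarrow> (nat \<Rightarrow> 'v \<times> 'v) \<Rightarrow> (nat \<Rightarrow> bool) \<Rightarrow> nat set \<Rightarrow> letter list" where
  "activity_word m ends pos S = map (act m ends pos S) [1..<m+1]"

end

theory Submission
  imports Defs
begin

text \<open>Every edge at an interior vertex of the path is one of the two path edges through it, so
  a segment of interior vertices whose two bounding path edges are absent is cut off from the
  rest of the graph. Hence a spanning tree misses at most one path edge, and deleting a path edge
  from the tree separates the segment on one side of it. When the whole path lies in the tree,
  deleting any path edge gives the same connectivity between ordinary vertices as deleting the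
  whole path (the interior vertices just hang off the two ends), so all path edges are
  internally active for the same reason, namely iff no edge below the path reconnects the tree
  cut along the path. If e_(i+j) is the missing edge, the tree edges before it are internally
  active because anything reconnecting them must touch the segment they cut off, which only
  later path edges do; the tree edges after it are reconnected by e_(i+j) itself, and e_(i+j)
  closes a cycle through e_i.\<close>

lemma conn_sym:
  assumes "conn ends F x y" shows "conn ends F y x"
proof -
  have "(x, y) \<in> (adj ends F)\<^sup>*" using assms by (simp add: conn_def)
  then have "(y, x) \<in> (adj ends F)\<^sup>*"
  proof (induction rule: rtrancl_induct)
    case (step z w)
    have "(w, z) \<in> adj ends F" using step(2) by (auto simp: adj_def)
    then show ?case using step(3) by (rule converse_rtrancl_into_rtrancl)
  qed simp
  then show ?thesis by (simp add: conn_def)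
qed

lemma conn_trans:
  "conn ends F x y \<Longrightarrow> conn ends F y z \<Longrightarrow> conn ends F x z"
  unfolding conn_def by (rule rtrancl_trans)

lemma conn_mono:
  assumes "F \<subseteq> F'" "conn ends F x y" shows "conn ends F' x y"
proof -
  have "adj ends F \<subseteq> adj ends F'" using assms(1) unfolding adj_def by blast
  then show ?thesis using assms(2) unfolding conn_def by (meson rtrancl_mono subsetD)
qed

lemma conn_edge:
  assumes "f \<in> F" shows "conn ends F (fst (ends f)) (snd (ends f))"
proof -
  have "(fst (ends f), snd (ends f)) \<in> adj ends F" using assms unfolding adj_def by force
  then show ?thesis unfolding conn_def by (rule r_into_rtrancl)
qed

lemma conn_closed:
  assumes closed: "\<And>x y. (x, y) \<in> adj ends F \<Longrightarrow> x \<in> C \<Longrightarrow> y \<in> C"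
    and "conn ends F x y" and "x \<in> C"
  shows "y \<in> C"
proof -
  have "(x, y) \<in> (adj ends F)\<^sup>*" using assms(2) by (simp add: conn_def)
  then show ?thesis by (induction rule: rtrancl_induct) (use assms(3) closed in auto)
qed

lemma conn_map:
  assumes step: "\<And>x y. (x, y) \<in> adj ends F \<Longrightarrow> \<pi> x = \<pi> y \<or> (\<pi> x, \<pi> y) \<in> adj ends' F'"
    and "conn ends F x y"
  shows "conn ends' F' (\<pi> x) (\<pi> y)"
proof -
  have "(x, y) \<in> (adj ends F)\<^sup>*" using assms(2) by (simp add: conn_def)
  then have "(\<pi> x, \<pi> y) \<in> (adj ends' F')\<^sup>*"
  proof (induction rule: rtrancl_induct)
    case (step y z)
    then show ?case using assms(1)[OF step(2)] by (metis rtrancl.rtrancl_into_rtrancl)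
  qed simp
  then show ?thesis by (simp add: conn_def)
qed

lemma conn_delete_edge:
  assumes "conn ends F x z"
  shows "conn ends (F - {g}) x z \<or> conn ends (F - {g}) x (fst (ends g))
         \<or> conn ends (F - {g}) x (snd (ends g))"
proof -
  have "(x, z) \<in> (adj ends F)\<^sup>*" using assms by (simp add: conn_def)
  then show ?thesis
  proof (induction rule: rtrancl_induct)
    case (step y z)
    obtain f where f: "f \<in> F" "(y, z) = ends f \<or> (z, y) = ends f"
      using step(2) by (auto simp: adj_def)
    show ?case
    proof (cases "f = g")
      case True
      then have "y = fst (ends g) \<or> y = snd (ends g)" using f by (metis fst_conv snd_conv)
      then show ?thesis using step(3) by auto
    next
      case False
      then have "(y, z) \<in> adj ends (F - {g})" using f by (auto simp: adj_def)
      then show ?thesis using step(3) unfolding conn_def by (meson rtrancl.rtrancl_into_rtrancl)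
    qed
  qed (simp add: conn_def)
qed

lemma map_upt_const:
  assumes "\<And>t. a \<le> t \<Longrightarrow> t < b \<Longrightarrow> g t = c"
  shows "map g [a..<b] = replicate (b - a) c"
proof -
  have "map g [a..<b] = map (\<lambda>_. c) [a..<b]" by (rule map_cong) (auto simp: assms)
  then show ?thesis by (simp add: map_replicate_const)
qed

lemma activity_word_window:
  assumes "1 \<le> i" "i + k \<le> m"
  shows "take (k + 1) (drop (i - 1) (activity_word m ends pos S))
           = map (\<lambda>t. act m ends pos S (i + t)) [0..<k+1]"
proof -
  have "drop (i - 1) [1..<m+1] = [i..<m+1]" using assms by simp
  moreover have "take (k + 1) [i..<m+1] = [i..<i+(k+1)]" using assms by (intro take_upt) simp
  ultimately have "take (k + 1) (drop (i - 1) (activity_word m ends pos S))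
      = map (act m ends pos S) [i..<i+(k+1)]"
    unfolding activity_word_def by (simp only: drop_map take_map)
  also have "\<dots> = map (\<lambda>t. act m ends pos S (i + t)) [0..<k+1]"
    by (rule nth_equalityI) (simp_all del: upt_Suc)
  finally show ?thesis .
qed

lemma act_positive:
  "pos e \<Longrightarrow> act m ends pos S e =
     (if e \<in> S then (if int_active m ends S e then L else D)
      else (if ext_active m ends S e then l else d))"
  by (simp add: act_def)

locale degree_two_path =
  fixes V :: "'v set" and m :: nat and ends :: "nat \<Rightarrow> 'v \<times> 'v"
    and i k :: nat and vs :: "nat \<Rightarrow> 'v"
  assumes graph: "graph V m ends"
    and range: "1 \<le> i" "i + k \<le> m"
    and path_dist: "inj_on vs {0..k+1}"
    and path_edges: "\<forall>r\<le>k. ends (i + r) = (vs r, vs (r + 1)) \<or> ends (i + r) = (vs (r + 1), vs r)"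
    and deg2: "\<forall>r\<in>{1..k}. degree m ends (vs r) = 2"
begin

lemma vs_eq_iff: "a \<le> k + 1 \<Longrightarrow> b \<le> k + 1 \<Longrightarrow> vs a = vs b \<longleftrightarrow> a = b"
  using path_dist by (auto simp: inj_on_def)

lemma vs_notin_image: "a \<le> k + 1 \<Longrightarrow> a \<notin> A \<Longrightarrow> A \<subseteq> {0..k+1} \<Longrightarrow> vs a \<notin> vs ` A"
  using vs_eq_iff by fastforce

lemma path_edge_ends:
  "r \<le> k \<Longrightarrow> ends (i + r) = (vs r, vs (r + 1)) \<or> ends (i + r) = (vs (r + 1), vs r)"
  using path_edges by auto

lemma path_vertex_in_V:
  assumes "t \<le> k + 1" shows "vs t \<in> V"
proof -
  define r where "r = min t k"
  have r: "r \<le> k" "t = r \<or> t = r + 1" using assms by (auto simp: r_def)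
  have "i + r \<in> {1..m}" using range r by auto
  then have "fst (ends (i + r)) \<in> V \<and> snd (ends (i + r)) \<in> V" using graph by (simp add: graph_def)
  then show ?thesis using path_edge_ends[OF r(1)] r(2) by auto
qed

lemma edge_at_interior_vertex:
  assumes f: "f \<in> {1..m}" and t: "1 \<le> t" "t \<le> k" and "incident ends f (vs t)"
  shows "f = i + t - 1 \<or> f = i + t"
proof (rule ccontr)
  assume other: "\<not> ?thesis"
  define A where "A = {r\<in>{1..m}. fst (ends r) = vs t}"
  define B where "B = {r\<in>{1..m}. snd (ends r) = vs t}"
  have "card A + card B = 2" using deg2 t by (simp add: degree_def A_def B_def)
  have at_vs: "g \<in> A \<union> B" if "g \<in> {1..m}" "incident ends g (vs t)" for g
    using that by (auto simp: A_def B_def incident_def)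
  have "t - 1 \<le> k" "t - 1 + 1 = t" using t by auto
  then have "incident ends (i + (t - 1)) (vs t)" "incident ends (i + t) (vs t)"
    using path_edge_ends[of "t - 1"] path_edge_ends[of t] t(2) by (auto simp: incident_def)
  moreover have "i + (t - 1) \<in> {1..m}" "i + t \<in> {1..m}" using range t by auto
  ultimately have "i + (t - 1) \<in> A \<union> B" "i + t \<in> A \<union> B" using at_vs by blast+
  moreover have "f \<in> A \<union> B" using at_vs f assms(4) by blast
  ultimately have "card {i + (t - 1), i + t, f} \<le> card (A \<union> B)"
    by (intro card_mono) (auto simp: A_def B_def)
  also have "\<dots> \<le> card A + card B" by (rule card_Un_le)
  finally show False using other t \<open>card A + card B = 2\<close> by auto
qed

lemma off_path_edge_avoids_interior:
  assumes "f \<in> {1..m}" "f \<notin> {i..i+k}" "incident ends f z"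
  shows "z \<notin> vs ` {1..k}"
  using assms edge_at_interior_vertex by fastforce

lemma path_segment_closed:
  assumes F: "F \<subseteq> {1..m}" and pq: "1 \<le> p" "p \<le> q" "q \<le> k"
    and gaps: "i + p - 1 \<notin> F" "i + q \<notin> F"
    and "conn ends F x y" and "x \<in> vs ` {p..q}"
  shows "y \<in> vs ` {p..q}"
proof (rule conn_closed[OF _ assms(7,8)])
  fix a b assume ab: "(a, b) \<in> adj ends F" and "a \<in> vs ` {p..q}"
  then obtain t where t: "t \<in> {p..q}" "a = vs t" by auto
  obtain f where f: "f \<in> F" "(a, b) = ends f \<or> (b, a) = ends f" using ab by (auto simp: adj_def)
  then have "incident ends f (vs t)" using t(2) by (metis fst_conv snd_conv incident_def)
  then have "f = i + t - 1 \<or> f = i + t"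
    using edge_at_interior_vertex[of f t] F f(1) pq t(1) by auto
  then obtain u where u: "{u, u + 1} \<subseteq> {p..q}" "f = i + u"
  proof
    assume "f = i + t - 1"
    moreover have "t \<noteq> p" using gaps f(1) \<open>f = i + t - 1\<close> by auto
    ultimately show thesis using t by (intro that[of "t - 1"]) auto
  next
    assume "f = i + t"
    moreover have "t \<noteq> q" using gaps f(1) \<open>f = i + t\<close> by auto
    ultimately show thesis using t by (intro that[of t]) auto
  qed
  then have "b \<in> vs ` {u, u + 1}" using f(2) path_edge_ends[of u] pq by auto
  then show "b \<in> vs ` {p..q}" using u(1) by blast
qed

lemma path_edge_separated:
  assumes "F \<subseteq> {1..m}" "1 \<le> p" "p \<le> q" "q \<le> k" "i + p - 1 \<notin> F" "i + q \<notin> F"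
    and s: "s \<le> k" and cut: "vs s \<in> vs ` {p..q} \<longleftrightarrow> vs (s + 1) \<notin> vs ` {p..q}"
  shows "\<not> conn ends F (fst (ends (i + s))) (snd (ends (i + s)))"
proof
  assume "conn ends F (fst (ends (i + s))) (snd (ends (i + s)))"
  then have "conn ends F (vs s) (vs (s + 1)) \<and> conn ends F (vs (s + 1)) (vs s)"
    using path_edge_ends[OF s] conn_sym by fastforce
  then show False using path_segment_closed[OF assms(1-6)] cut by blast
qed

lemma conn_delete_path_edge:
  assumes F: "F \<subseteq> {1..m}" and r: "r \<le> k" and "conn ends (F - {i + r}) x y"
    and x: "x \<notin> vs ` {1..k}" and y: "y \<notin> vs ` {1..k}"
  shows "conn ends (F - {i..i+k}) x y"
proof -
  \<comment> \<open>collapse the interior vertices on either side of the deleted edge onto the path's ends\<close>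
  define \<pi> where "\<pi> z =
    (if z \<in> vs ` {1..r} then vs 0 else if z \<in> vs ` {r+1..k} then vs (k + 1) else z)" for z
  have left: "\<pi> (vs t) = vs 0" if "t \<le> r" for t
    using that r vs_notin_image[of 0 "{r+1..k}"] by (cases "t = 0") (auto simp: \<pi>_def)
  have right: "\<pi> (vs t) = vs (k + 1)" if "r < t" "t \<le> k + 1" for t
    using that r vs_notin_image[of t "{1..r}"] vs_notin_image[of "k + 1" "{1..r}"]
    by (cases "t = k + 1") (auto simp: \<pi>_def)
  have fixed: "\<pi> z = z" if "z \<notin> vs ` {1..k}" for z
    using that r by (auto simp: \<pi>_def)
  have "\<pi> a = \<pi> b \<or> (\<pi> a, \<pi> b) \<in> adj ends (F - {i..i+k})"
    if ab: "(a, b) \<in> adj ends (F - {i + r})" for a b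
  proof -
    obtain g where g: "g \<in> F" "g \<noteq> i + r" "(a, b) = ends g \<or> (b, a) = ends g"
      using ab by (auto simp: adj_def)
    show ?thesis
    proof (cases "g \<in> {i..i+k}")
      case True
      define s where "s = g - i"
      have s: "s \<le> k" "g = i + s" "s \<noteq> r" using True g(2) by (auto simp: s_def)
      then have "a \<in> {vs s, vs (s + 1)}" "b \<in> {vs s, vs (s + 1)}"
        using g(3) path_edge_ends[OF s(1)] by auto
      then have "\<pi> a = \<pi> b"
        using left[of s] left[of "s + 1"] right[of s] right[of "s + 1"] s by (cases "s < r") auto
      then show ?thesis ..
    next
      case False
      have "g \<in> {1..m}" "incident ends g a" "incident ends g b"
        using g F by (auto simp: incident_def) (metis fst_conv snd_conv)+
      then have "a \<notin> vs ` {1..k}" "b \<notin> vs ` {1..k}"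
        using False off_path_edge_avoids_interior by blast+
      then show ?thesis using g False fixed by (auto simp: adj_def)
    qed
  qed
  then have "conn ends (F - {i..i+k}) (\<pi> x) (\<pi> y)" by (rule conn_map[OF _ assms(3)])
  then show ?thesis using fixed x y by simp
qed

end

locale path_in_spanning_tree = degree_two_path +
  fixes S :: "nat set"
  assumes tree: "spanning_tree V m ends S"
begin

lemma tree_edges: "S \<subseteq> {1..m}"
  using tree by (simp add: spanning_tree_def)

lemma tree_connected: "x \<in> V \<Longrightarrow> y \<in> V \<Longrightarrow> conn ends S x y"
  using tree by (simp add: spanning_tree_def)

lemma path_edge_missing_unique:
  assumes a: "a \<le> k" "i + a \<notin> S"
  shows "{i..i+k} - S = {i + a}"
proof -
  \<comment> \<open>two missing path edges would cut the segment between them off from vs 0\<close>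
  have False if "b < c" "c \<le> k" "i + b \<notin> S" "i + c \<notin> S" for b c
  proof -
    have "conn ends S (vs c) (vs 0)" using tree_connected path_vertex_in_V that by simp
    moreover have "vs c \<in> vs ` {b+1..c}" using that by auto
    moreover have "vs 0 \<notin> vs ` {b+1..c}" using that by (intro vs_notin_image) auto
    ultimately show False using path_segment_closed[OF tree_edges, of "b + 1" c] that by auto
  qed
  then have "i + b \<in> S" if "b \<le> k" "b \<noteq> a" for b
    using that a by (metis linorder_neqE_nat)
  then show ?thesis using a by (force simp: le_iff_add)
qed

lemma not_int_active_after_missing:
  assumes "j < s" "s \<le> k" "i + j \<notin> S"
  shows "\<not> int_active m ends S (i + s)"
proof -
  have "\<not> conn ends (S - {i + s}) (fst (ends (i + j))) (snd (ends (i + j)))"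
    using assms tree_edges vs_notin_image[of j "{j+1..s}"]
    by (intro path_edge_separated[of _ "j + 1" s]) auto
  then have "reconnects ends S (i + s) (i + j)" by (simp add: reconnects_def)
  moreover have "i + j \<in> {1..m}" using range assms by auto
  ultimately show ?thesis using assms(1) by (auto simp: int_active_def)
qed

lemma not_ext_active_missing:
  assumes "0 < j" "j \<le> k" "i \<in> S" "i + j \<notin> S"
  shows "\<not> ext_active m ends S (i + j)"
proof -
  have "\<not> conn ends (S - {i}) (fst (ends (i + j))) (snd (ends (i + j)))"
    using assms tree_edges vs_notin_image[of "j + 1" "{1..j}"]
    by (intro path_edge_separated[of _ 1 j]) auto
  then have "on_cycle ends S (i + j) i" using assms(3) by (simp add: on_cycle_def)
  moreover have "i \<in> {1..m}" using range by auto
  ultimately show ?thesis using assms(1) by (auto simp: ext_active_def)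
qed

lemma int_active_before_missing:
  assumes sj: "s < j" "j \<le> k" and gap: "i + j \<notin> S"
  shows "int_active m ends S (i + s)"
  unfolding int_active_def
proof (intro ballI impI)
  define F where "F = S - {i + s}"
  have F: "F \<subseteq> {1..m}" "i + (s + 1) - 1 \<notin> F" "i + j \<notin> F"
    using tree_edges gap by (auto simp: F_def)
  \<comment> \<open>deleting e_(i+s) only cuts off the segment vs (s+1), ..., vs j\<close>
  have to_vs: "conn ends F z (vs s)" if z: "z \<in> V" "z \<notin> vs ` {s+1..j}" for z
  proof -
    have "conn ends S z (vs s)" using tree_connected path_vertex_in_V sj z(1) by simp
    then have "conn ends F z (vs s) \<or> conn ends F z (vs (s + 1))"
      using conn_delete_edge[of ends S z "vs s" "i + s"] path_edge_ends[of s] sj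
      by (auto simp: F_def)
    moreover have "\<not> conn ends F z (vs (s + 1))"
      using conn_sym path_segment_closed[OF F(1) _ _ _ F(2,3), of "vs (s + 1)" z] sj z(2) by force
    ultimately show ?thesis by simp
  qed
  fix f assume f: "f \<in> {1..m}" and "reconnects ends S (i + s) f"
  then have disconnected: "\<not> conn ends F (fst (ends f)) (snd (ends f))"
    by (simp add: reconnects_def F_def)
  show "i + s \<le> f"
  proof (rule ccontr)
    assume "\<not> i + s \<le> f"
    have "z \<notin> vs ` {s+1..j}" if "incident ends f z" for z
    proof
      assume "z \<in> vs ` {s+1..j}"
      then obtain t where "t \<in> {s+1..j}" "z = vs t" by auto
      then show False using edge_at_interior_vertex[OF f, of t] that sj \<open>\<not> i + s \<le> f\<close> by auto
    qed
    moreover have "fst (ends f) \<in> V" "snd (ends f) \<in> V" using graph f by (auto simp: graph_def)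
    ultimately have "conn ends F (fst (ends f)) (vs s)" "conn ends F (snd (ends f)) (vs s)"
      using to_vs by (auto simp: incident_def)
    then show False using disconnected conn_sym conn_trans by metis
  qed
qed

lemma int_active_iff_path_in_tree:
  assumes path: "{i..i+k} \<subseteq> S" and r: "r \<le> k"
  shows "int_active m ends S (i + r) \<longleftrightarrow>
    (\<forall>f\<in>{1..m}. f < i \<longrightarrow> conn ends (S - {i..i+k}) (fst (ends f)) (snd (ends f)))"
proof
  assume active: "int_active m ends S (i + r)"
  show "\<forall>f\<in>{1..m}. f < i \<longrightarrow> conn ends (S - {i..i+k}) (fst (ends f)) (snd (ends f))"
  proof (intro ballI impI)
    fix f assume f: "f \<in> {1..m}" "f < i"
    then have "fst (ends f) \<notin> vs ` {1..k}" "snd (ends f) \<notin> vs ` {1..k}"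
      using off_path_edge_avoids_interior[of f] by (auto simp: incident_def)
    moreover have "\<not> reconnects ends S (i + r) f" using active f by (auto simp: int_active_def)
    ultimately show "conn ends (S - {i..i+k}) (fst (ends f)) (snd (ends f))"
      using conn_delete_path_edge[OF tree_edges r] by (simp add: reconnects_def)
  qed
next
  assume below: "\<forall>f\<in>{1..m}. f < i \<longrightarrow> conn ends (S - {i..i+k}) (fst (ends f)) (snd (ends f))"
  show "int_active m ends S (i + r)"
    unfolding int_active_def reconnects_def
  proof (intro ballI impI)
    fix f assume f: "f \<in> {1..m}"
      and disconnected: "\<not> conn ends (S - {i + r}) (fst (ends f)) (snd (ends f))"
    show "i + r \<le> f"
    proof (rule ccontr)
      assume "\<not> i + r \<le> f"
      then have "f \<in> {i..i+k} - {i + r} \<or> f < i" using r by auto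
      then have "f \<in> S - {i + r} \<or> (f < i \<and> S - {i..i+k} \<subseteq> S - {i + r})"
        using path r by auto
      then show False using disconnected conn_edge conn_mono below f by metis
    qed
  qed
qed

lemma path_edge_in_tree:
  assumes "a \<le> k" "i + a \<notin> S" "t \<le> k" "t \<noteq> a"
  shows "i + t \<in> S"
proof -
  have "i + t \<in> {i..i+k}" "i + t \<noteq> i + a" using assms(3,4) by auto
  then show ?thesis using path_edge_missing_unique[OF assms(1,2)] by blast
qed

abbreviation path_word :: "(nat \<Rightarrow> bool) \<Rightarrow> letter list" where
  "path_word pos \<equiv> map (\<lambda>t. act m ends pos S (i + t)) [0..<k+1]"

lemma path_word_path_in_tree:
  assumes "\<forall>r\<le>k. pos (i + r)" and path: "{i..i+k} \<subseteq> S"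
  shows "path_word pos = replicate (k + 1) L \<or> path_word pos = replicate (k + 1) D"
proof (cases "\<forall>f\<in>{1..m}. f < i \<longrightarrow> conn ends (S - {i..i+k}) (fst (ends f)) (snd (ends f))")
  case True
  then have "path_word pos = replicate (k + 1 - 0) L"
    using assms int_active_iff_path_in_tree by (intro map_upt_const) (auto simp: act_positive)
  then show ?thesis by simp
next
  case False
  then have "path_word pos = replicate (k + 1 - 0) D"
    using assms int_active_iff_path_in_tree by (intro map_upt_const) (auto simp: act_positive)
  then show ?thesis by simp
qed

lemma path_word_first_missing:
  assumes pos: "\<forall>r\<le>k. pos (i + r)" and gap: "i \<notin> S"
  shows "path_word pos = l # replicate k D \<or> path_word pos = d # replicate k D"
proof -
  have "[0..<k+1] = 0 # [1..<k+1]" by (simp add: upt_conv_Cons)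
  moreover have "map (\<lambda>t. act m ends pos S (i + t)) [1..<k+1] = replicate (k + 1 - 1) D"
    using pos gap path_edge_in_tree[of 0] not_int_active_after_missing[of 0]
    by (intro map_upt_const) (auto simp: act_positive)
  moreover have "act m ends pos S i \<in> {l, d}"
    using pos[rule_format, of 0] gap by (simp add: act_positive)
  ultimately show ?thesis by auto
qed

lemma path_word_interior_missing:
  assumes pos: "\<forall>r\<le>k. pos (i + r)" and j: "0 < j" "j \<le> k" and gap: "i + j \<notin> S"
  shows "path_word pos = replicate j L @ [d] @ replicate (k - j) D"
proof -
  note in_S = path_edge_in_tree[OF j(2) gap]
  have "[0..<k+1] = [0..<j] @ j # [j+1..<k+1]"
    using j upt_add_eq_append[of 0 j "k + 1 - j"] by (simp add: upt_conv_Cons)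
  moreover have "map (\<lambda>t. act m ends pos S (i + t)) [0..<j] = replicate (j - 0) L"
    using pos j in_S gap int_active_before_missing by (intro map_upt_const) (auto simp: act_positive)
  moreover have "map (\<lambda>t. act m ends pos S (i + t)) [j+1..<k+1] = replicate (k + 1 - (j + 1)) D"
    using pos in_S not_int_active_after_missing[OF _ _ gap]
    by (intro map_upt_const) (auto simp: act_positive)
  moreover have "act m ends pos S (i + j) = d"
    using pos j in_S[of 0] gap not_ext_active_missing by (auto simp: act_positive)
  ultimately show ?thesis by simp
qed

end

theorem lemma3p1:
  fixes V :: "'v set" and m :: nat and ends :: "nat \<Rightarrow> 'v \<times> 'v" and pos :: "nat \<Rightarrow> bool"
    and S :: "nat set" and i k :: nat and vs :: "nat \<Rightarrow> 'v"
  assumes G: "graph V m ends"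
    and range: "1 \<le> i" "i + k \<le> m" and kpos: "k > 0"
    and positive: "\<forall>r\<le>k. pos (i + r)"
    and path_dist: "inj_on vs {0..k+1}"
    and path_edges: "\<forall>r\<le>k. ends (i + r) = (vs r, vs (r + 1)) \<or> ends (i + r) = (vs (r + 1), vs r)"
    and deg2: "\<forall>r\<in>{1..k}. degree m ends (vs r) = 2"
    and ST: "spanning_tree V m ends S"
  shows "let w = take (k + 1) (drop (i - 1) (activity_word m ends pos S)) in
           ({i..i+k} \<subseteq> S \<and> (w = replicate (k + 1) L \<or> w = replicate (k + 1) D))
         \<or> (\<exists>j. 0 < j \<and> j \<le> k \<and> {i..i+k} - S = {i + j}
                \<and> w = replicate j L @ [d] @ replicate (k - j) D)
         \<or> ({i..i+k} - S = {i} \<and> (w = l # replicate k D \<or> w = d # replicate k D))"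
proof -
  interpret path_in_spanning_tree V m ends i k vs S
    using assms by unfold_locales auto
  have window: "take (k + 1) (drop (i - 1) (activity_word m ends pos S)) = path_word pos"
    using range by (rule activity_word_window)
  show ?thesis
  proof (cases "{i..i+k} \<subseteq> S")
    case True
    then show ?thesis unfolding Let_def window using path_word_path_in_tree[OF positive] by blast
  next
    case False
    then obtain x where x: "x \<in> {i..i+k}" "x \<notin> S" by blast
    define j where "j = x - i"
    have j: "j \<le> k" "i + j \<notin> S" using x by (auto simp: j_def)
    have missing: "{i..i+k} - S = {i + j}" by (rule path_edge_missing_unique[OF j])
    show ?thesis
    proof (cases "j = 0")
      case True
      then have "path_word pos = l # replicate k D \<or> path_word pos = d # replicate k D"
        using path_word_first_missing[OF positive] j(2) by simp
      then show ?thesis unfolding Let_def window using missing True by simp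
    next
      case False
      then have "path_word pos = replicate j L @ [d] @ replicate (k - j) D"
        using path_word_interior_missing[OF positive _ j] by simp
      then show ?thesis unfolding Let_def window
        using missing False j(1) by (intro disjI2 disjI1 exI[of _ j]) simp
    qed
  qed
qed

end
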